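(* Let $K\ge 2$, let $\mathcal{X}$ be an instance space, and let $\mathcal{D}$ be a joint distribution of $(X,Y)$ on $\mathcal{X}\times[K]$, where $[K]=\{1,\dots,K\}$. Write $M$ for the marginal distribution of $X$ and $\boldsymbol{\eta}(x)=(\mathbb{P}(Y=1\mid X=x),\dots,\mathbb{P}(Y=K\mid X=x))^\top$. Let $\overline{\mathcal{D}}$ be a joint distribution of $(X,\overline{Y})$ on $\mathcal{X}\times[K]$ with the same marginal $M$ of $X$ and with class-probability function $\overline{\boldsymbol{\eta}}(x)=(\mathbb{P}(\overline{Y}=1\mid X=x),\dots,\mathbb{P}(\overline{Y}=K\mid X=x))^\top$ satisfying $$\overline{\boldsymbol{\eta}}(x)=\mathbf{T}\boldsymbol{\eta}(x)\quad\text{for all }x,$$ where $\mathbf{T}\in\mathbb{R}^{K\times K}$ has $0$ on the diagonal and $\frac{1}{K-1}$ in every off-diagonal entry. Let $\mathbf{g}:\mathcal{X}\to\mathbb{R}^K$ be any decision function and $\ell:[K]\times\mathbb{R}^K\to\mathbb{R}_+$ any loss, and write $\boldsymbol{\ell}(\mathbf{g}(x))=(\ell(1,\mathbf{g}(x)),\dots,\ell(K,\mathbf{g}(x)))^\top$. Define the complementary loss $\overline{\ell}$ by $$\overline{\boldsymbol{\ell}}(\mathbf{g}(x))=\big(-(K-1)\mathbf{I}_K+\mathbf{1}\mathbf{1}^\top\big)\boldsymbol{\ell}(\mathbf{g}(x)),$$ equivalently $\overline{\ell}(k,\mathbf{g}(x))=-(K-1)\,\ell(k,\mathbf{g}(x))+\sum_{j=1}^K\ell(j,\mathbf{g}(x))$,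 where $\mathbf{I}_K$ is the $K\times K$ identity and $\mathbf{1}$ the all-ones vector in $\mathbb{R}^K$. Then $$R(\mathbf{g};\ell):=\mathbb{E}_{(X,Y)\sim\mathcal{D}}[\ell(Y,\mathbf{g}(X))]=\overline{R}(\mathbf{g};\overline{\ell}):=\mathbb{E}_{(X,\overline{Y})\sim\overline{\mathcal{D}}}[\overline{\ell}(\overline{Y},\mathbf{g}(X))].$$
   Context: $\overline{Y}$ is a "complementary label": a class that the pattern does not belong to. The relation $\overline{\boldsymbol{\eta}}=\mathbf{T}\boldsymbol{\eta}$ means that, given $x$, the complementary label is drawn uniformly among the $K-1$ classes other than the true one. *)

theory Defs
  imports "HOL-Probability.Probability"
begin

definition T_mat :: "nat \<Rightarrow> nat \<Rightarrow> nat \<Rightarrow> real" where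
  "T_mat K i j = (if i = j then 0 else 1 / (real K - 1))"

definition L_mat :: "nat \<Rightarrow> nat \<Rightarrow> nat \<Rightarrow> real" where
  "L_mat K i j = - (real K - 1) * (if i = j then 1 else 0) + 1"

definition comp_loss :: "nat \<Rightarrow> (nat \<Rightarrow> 'v \<Rightarrow> real) \<Rightarrow> nat \<Rightarrow> 'v \<Rightarrow> real" where
  "comp_loss K l k v = (\<Sum>j\<in>{1..K}. L_mat K k j * l j v)"

text \<open>eta is (a version of) the class-probability function of D with respect to the
  marginal M: eta x k = P(Y = k | X = x), i.e. P(X \<in> A, Y = k) = int_A eta(x)_k dM(x).\<close>
definition class_prob :: "nat \<Rightarrow> 'a measure \<Rightarrow> ('a \<times> nat) measure \<Rightarrow> ('a \<Rightarrow> nat \<Rightarrow> real) \<Rightarrow> bool" where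
  "class_prob K M D \<eta> \<longleftrightarrow>
     (\<forall>k\<in>{1..K}. (\<lambda>x. \<eta> x k) \<in> borel_measurable M \<and> (\<forall>x\<in>space M. 0 \<le> \<eta> x k) \<and>
        (\<forall>A\<in>sets M. emeasure D (A \<times> {k}) = (\<integral>\<^sup>+ x\<in>A. ennreal (\<eta> x k) \<partial>M)))"

end

theory Submission imports Defs begin

text \<open>The class-probability function is a density of \<open>D\<close> with respect to \<open>M \<times> counting measure\<close>.
  Hence the risk of a loss is the \<open>M\<close>-integral of the pointwise conditional risk
  \<open>\<eta>(x)\<^sup>T \<ell>(g x)\<close>. Since \<open>T\<^sup>T (-(K-1) I + 1 1\<^sup>T) = I\<close>, the conditional risk of the
  complementary loss under \<open>\<eta>bar = T \<eta>\<close> coincides pointwise with that of \<open>\<ell>\<close> under \<open>\<eta>\<close>.\<close>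

lemma measurable_class_prob:
  assumes "class_prob K M D \<eta>"
  shows "(\<lambda>(x, k). \<eta> x k) \<in> borel_measurable (M \<Otimes>\<^sub>M count_space {1..K})"
  unfolding case_prod_beta
proof (rule measurable_compose_countable'[where f="\<lambda>k z. \<eta> (fst z) k" and g=snd and I="{1..K}"])
  fix k assume "k \<in> {1..K}"
  with assms show "(\<lambda>z. \<eta> (fst z) k) \<in> borel_measurable (M \<Otimes>\<^sub>M count_space {1..K})"
    by (intro measurable_compose[OF measurable_fst]) (auto simp: class_prob_def)
qed auto

lemma emeasure_rectangle_class_prob:
  assumes sets_D: "sets D = sets (M \<Otimes>\<^sub>M count_space {1..K})"
    and cp: "class_prob K M D \<eta>"
    and A: "A \<in> sets M" and B: "B \<subseteq> {1..K}"
  shows "emeasure D (A \<times> B) = (\<integral>\<^sup>+ x. (\<Sum>k\<in>{1..K}. ennreal (\<eta> x k) * indicator (A \<times> B) (x, k)) \<partial>M)"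
proof -
  have "finite B" using B finite_subset by blast
  have "emeasure D (A \<times> B) = emeasure D (\<Union>k\<in>B. A \<times> {k})"
    by (rule arg_cong[where f="emeasure D"]) auto
  also have "\<dots> = (\<Sum>k\<in>B. emeasure D (A \<times> {k}))"
    using \<open>finite B\<close> A B sets_D by (intro sum_emeasure[symmetric]) (auto simp: disjoint_family_on_def)
  also have "\<dots> = (\<Sum>k\<in>B. \<integral>\<^sup>+ x. ennreal (\<eta> x k) * indicator A x \<partial>M)"
    using A B cp by (intro sum.cong refl) (auto simp: class_prob_def)
  also have "\<dots> = (\<Sum>k\<in>{1..K}. \<integral>\<^sup>+ x. ennreal (\<eta> x k) * indicator (A \<times> B) (x, k) \<partial>M)"
    using B by (intro sum.mono_neutral_cong_left) (auto simp: indicator_def)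
  also have "\<dots> = (\<integral>\<^sup>+ x. (\<Sum>k\<in>{1..K}. ennreal (\<eta> x k) * indicator (A \<times> B) (x, k)) \<partial>M)"
    using A cp by (intro nn_integral_sum[symmetric] borel_measurable_times_ennreal)
      (auto simp: class_prob_def indicator_times)
  finally show ?thesis .
qed

lemma class_prob_eq_density:
  assumes "finite_measure D" and sets_D: "sets D = sets (M \<Otimes>\<^sub>M count_space {1..K})"
    and cp: "class_prob K M D \<eta>"
  shows "D = density (M \<Otimes>\<^sub>M count_space {1..K}) (\<lambda>(x, k). ennreal (\<eta> x k))"
    (is "D = ?N")
proof -
  let ?C = "count_space {1..K} :: nat measure"
  let ?E = "{a \<times> b |a b. a \<in> sets M \<and> b \<in> sets ?C}"
  interpret C: finite_measure ?C by (rule finite_measure_count_space) simp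
  have \<eta>_measurable: "(\<lambda>(x, k). \<eta> x k) \<in> borel_measurable (M \<Otimes>\<^sub>M ?C)"
    using cp by (rule measurable_class_prob)
  show ?thesis
  proof (rule measure_eqI_generator_eq[OF Int_stable_pair_measure_generator[of M ?C],
        where \<Omega> = "space M \<times> {1..K}" and A="\<lambda>_. space M \<times> {1..K}"])
    show "?E \<subseteq> Pow (space M \<times> {1..K})"
      using sets.sets_into_space by fastforce
    show "sets D = sigma_sets (space M \<times> {1..K}) ?E" "sets ?N = sigma_sets (space M \<times> {1..K}) ?E"
      using sets_D by (simp_all add: sets_pair_measure)
    show "\<And>i::nat. emeasure D (space M \<times> {1..K}) \<noteq> \<infinity>"
      using \<open>finite_measure D\<close> by (simp add: finite_measure.emeasure_finite)
    show "range (\<lambda>_. space M \<times> {1..K}) \<subseteq> ?E" "(\<Union>i::nat. space M \<times> {1..K}) = space M \<times> {1..K}"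
      by auto
  next
    fix X assume "X \<in> ?E"
    then obtain A B where X: "X = A \<times> B" and A: "A \<in> sets M" and B: "B \<subseteq> {1..K}" by auto
    have "X \<in> sets (M \<Otimes>\<^sub>M ?C)" using X A B by auto
    have "emeasure ?N X = (\<integral>\<^sup>+ z. ennreal (\<eta> (fst z) (snd z)) * indicator X z \<partial>(M \<Otimes>\<^sub>M ?C))"
      using \<eta>_measurable \<open>X \<in> sets (M \<Otimes>\<^sub>M ?C)\<close> by (subst emeasure_density) (auto simp: case_prod_beta)
    also have "\<dots> = (\<integral>\<^sup>+ x. \<integral>\<^sup>+ k. ennreal (\<eta> x k) * indicator X (x, k) \<partial>?C \<partial>M)"
    proof -
      have "(\<lambda>z. ennreal (\<eta> (fst z) (snd z)) * indicator X z) \<in> borel_measurable (M \<Otimes>\<^sub>M ?C)"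
        using \<eta>_measurable \<open>X \<in> sets (M \<Otimes>\<^sub>M ?C)\<close>
        by (intro borel_measurable_times_ennreal borel_measurable_indicator measurable_compose[OF _ measurable_ennreal])
          (auto simp: case_prod_beta)
      from C.nn_integral_fst[OF this] show ?thesis by simp
    qed
    also have "\<dots> = emeasure D X"
      using emeasure_rectangle_class_prob[OF sets_D cp A B]
      by (simp add: nn_integral_count_space_finite X)
    finally show "emeasure D X = emeasure ?N X" ..
  qed
qed

lemma integral_class_prob:
  fixes f :: "'a \<times> nat \<Rightarrow> real"
  assumes D: "finite_measure D" and sets_D: "sets D = sets (M \<Otimes>\<^sub>M count_space {1..K})"
    and M: "sigma_finite_measure M" and cp: "class_prob K M D \<eta>" and f: "integrable D f"
  shows "integral\<^sup>L D f = (\<integral>x. (\<Sum>k\<in>{1..K}. \<eta> x k * f (x, k)) \<partial>M)"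
proof -
  let ?C = "count_space {1..K} :: nat measure"
  let ?h = "\<lambda>(x, k). \<eta> x k"
  interpret M: sigma_finite_measure M by fact
  interpret C: finite_measure ?C by (rule finite_measure_count_space) simp
  interpret pair_sigma_finite M ?C ..
  have D_eq: "D = density (M \<Otimes>\<^sub>M ?C) (\<lambda>z. ennreal (?h z))"
    using class_prob_eq_density[OF D sets_D cp] by (simp add: split_beta')
  have h_measurable: "?h \<in> borel_measurable (M \<Otimes>\<^sub>M ?C)"
    using cp by (rule measurable_class_prob)
  have h_nonneg: "AE z in M \<Otimes>\<^sub>M ?C. 0 \<le> ?h z"
    using cp by (intro AE_I2) (auto simp: space_pair_measure class_prob_def)
  have f_measurable: "f \<in> borel_measurable (M \<Otimes>\<^sub>M ?C)"
    using borel_measurable_integrable[OF f] measurable_cong_sets[OF sets_D refl] by blast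
  have hf_integrable: "integrable (M \<Otimes>\<^sub>M ?C) (\<lambda>z. ?h z *\<^sub>R f z)"
    using f unfolding D_eq by (subst (asm) integrable_density[OF f_measurable h_measurable h_nonneg])
  have "integral\<^sup>L D f = integral\<^sup>L (M \<Otimes>\<^sub>M ?C) (\<lambda>z. ?h z *\<^sub>R f z)"
    unfolding D_eq by (rule integral_density[OF f_measurable h_measurable h_nonneg])
  also have "\<dots> = (\<integral>x. (\<integral>k. \<eta> x k * f (x, k) \<partial>?C) \<partial>M)"
    using integral_fst'[OF hf_integrable] by simp
  also have "\<dots> = (\<integral>x. (\<Sum>k\<in>{1..K}. \<eta> x k * f (x, k)) \<partial>M)"
    by (simp add: lebesgue_integral_count_space_finite)
  finally show ?thesis .
qed

lemma sum_T_mat_mult_L_mat: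
  assumes K: "K \<ge> 2" and j: "j \<in> {1..K}" and m: "m \<in> {1..K}"
  shows "(\<Sum>i\<in>{1..K}. T_mat K i j * L_mat K i m) = (if j = m then 1 else 0)"
proof -
  have "real K - 1 \<noteq> 0" using K by simp
  have column_sum: "(\<Sum>i\<in>{1..K}. T_mat K i j) = 1"
  proof -
    have "(\<Sum>i\<in>{1..K}. T_mat K i j) = (\<Sum>i\<in>{1..K}. 1 / (real K - 1) - (if i = j then 1 / (real K - 1) else 0))"
      by (intro sum.cong) (auto simp: T_mat_def)
    also have "\<dots> = real K / (real K - 1) - 1 / (real K - 1)"
      using j by (simp add: sum_subtractf)
    also have "\<dots> = 1"
      using \<open>real K - 1 \<noteq> 0\<close> by (simp only: diff_divide_distrib[symmetric] divide_self_if if_False)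
    finally show ?thesis .
  qed
  have "(\<Sum>i\<in>{1..K}. T_mat K i j * L_mat K i m)
      = (\<Sum>i\<in>{1..K}. T_mat K i j - (if i = m then (real K - 1) * T_mat K i j else 0))"
    by (intro sum.cong) (auto simp: L_mat_def algebra_simps)
  also have "\<dots> = 1 - (real K - 1) * T_mat K m j"
    using m column_sum by (simp add: sum_subtractf)
  also have "\<dots> = (if j = m then 1 else 0)"
    using \<open>real K - 1 \<noteq> 0\<close> by (cases "j = m") (simp_all add: T_mat_def)
  finally show ?thesis .
qed

lemma sum_T_mat_mult_L_mat_mult:
  fixes e l :: "nat \<Rightarrow> real"
  assumes "K \<ge> 2"
  shows "(\<Sum>i\<in>{1..K}. (\<Sum>j\<in>{1..K}. T_mat K i j * e j) * (\<Sum>m\<in>{1..K}. L_mat K i m * l m))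
    = (\<Sum>j\<in>{1..K}. e j * l j)"
proof -
  have "(\<Sum>i\<in>{1..K}. (\<Sum>j\<in>{1..K}. T_mat K i j * e j) * (\<Sum>m\<in>{1..K}. L_mat K i m * l m))
      = (\<Sum>i\<in>{1..K}. \<Sum>j\<in>{1..K}. \<Sum>m\<in>{1..K}. T_mat K i j * L_mat K i m * (e j * l m))"
    by (simp add: sum_product algebra_simps)
  also have "\<dots> = (\<Sum>j\<in>{1..K}. \<Sum>m\<in>{1..K}. \<Sum>i\<in>{1..K}. T_mat K i j * L_mat K i m * (e j * l m))"
    by (subst sum.swap) (rule sum.cong[OF refl], rule sum.swap)
  also have "\<dots> = (\<Sum>j\<in>{1..K}. \<Sum>m\<in>{1..K}. (\<Sum>i\<in>{1..K}. T_mat K i j * L_mat K i m) * (e j * l m))"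
    by (simp add: sum_distrib_right)
  also have "\<dots> = (\<Sum>j\<in>{1..K}. \<Sum>m\<in>{1..K}. (if j = m then e j * l m else 0))"
    by (intro sum.cong refl, subst sum_T_mat_mult_L_mat[OF assms]) auto
  also have "\<dots> = (\<Sum>j\<in>{1..K}. e j * l j)"
    by simp
  finally show ?thesis .
qed

theorem theorem1:
  fixes K :: nat and M :: "'a measure" and D Dbar :: "('a \<times> nat) measure"
    and \<eta> \<eta>bar :: "'a \<Rightarrow> nat \<Rightarrow> real"
    and g :: "'a \<Rightarrow> (nat \<Rightarrow> real)" and l :: "nat \<Rightarrow> (nat \<Rightarrow> real) \<Rightarrow> real"
  assumes "K \<ge> 2"
    and "prob_space D" and "sets D = sets (M \<Otimes>\<^sub>M count_space {1..K})"
    and "distr D M fst = M" and "class_prob K M D \<eta>"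
    and "prob_space Dbar" and "sets Dbar = sets (M \<Otimes>\<^sub>M count_space {1..K})"
    and "distr Dbar M fst = M" and "class_prob K M Dbar \<eta>bar"
    and "\<forall>x\<in>space M. \<forall>i\<in>{1..K}. \<eta>bar x i = (\<Sum>j\<in>{1..K}. T_mat K i j * \<eta> x j)"
    and "\<forall>k v. 0 \<le> l k v"
    and "integrable D (\<lambda>(x, y). l y (g x))"
    and "integrable Dbar (\<lambda>(x, y). comp_loss K l y (g x))"
  shows "(\<integral>(x, y). l y (g x) \<partial>D) = (\<integral>(x, y). comp_loss K l y (g x) \<partial>Dbar)"
proof -
  have "fst \<in> measurable D M"
    using measurable_fst measurable_cong_sets[OF assms(3) refl] by blast
  then have "prob_space M"
    using prob_space.prob_space_distr[OF assms(2)] assms(4) by metis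
  then have M: "sigma_finite_measure M"
    by (rule prob_space_imp_sigma_finite)
  have "(\<integral>(x, y). l y (g x) \<partial>D) = (\<integral>x. (\<Sum>k\<in>{1..K}. \<eta> x k * l k (g x)) \<partial>M)"
    using integral_class_prob[OF _ assms(3) M assms(5,12)] assms(2)
    by (simp add: prob_space_def)
  also have "\<dots> = (\<integral>x. (\<Sum>k\<in>{1..K}. \<eta>bar x k * comp_loss K l k (g x)) \<partial>M)"
  proof (rule Bochner_Integration.integral_cong[OF refl])
    fix x assume "x \<in> space M"
    then show "(\<Sum>k\<in>{1..K}. \<eta> x k * l k (g x)) = (\<Sum>k\<in>{1..K}. \<eta>bar x k * comp_loss K l k (g x))"
      using assms(10) sum_T_mat_mult_L_mat_mult[OF assms(1), of "\<eta> x" "\<lambda>k. l k (g x)"]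
      by (simp add: comp_loss_def)
  qed
  also have "\<dots> = (\<integral>(x, y). comp_loss K l y (g x) \<partial>Dbar)"
    using integral_class_prob[OF _ assms(7) M assms(9,13)] assms(6)
    by (simp add: prob_space_def)
  finally show ?thesis .
qed

end
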